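(* Let $\mathcal{H}$ be a Hilbert space, $H_2\ge 0$ a selfadjoint operator on $\mathcal{H}$, and $H_1\ge0$ a selfadjoint operator on a closed subspace $\mathcal{H}_1\subset\mathcal{H}$ (possibly $\mathcal{H}_1=\mathcal{H}$). Let $\lambda_i:=\min\sigma(H_i)$, $i=1,2$, and assume $\lambda_1\ge\lambda_2$. Then $$0\le\lambda_1-\lambda_2\le(\lambda_1+1)^2\,\|(H_1+1)^{-1}-(H_2+1)^{-1}\|,$$ and, if $H_1$ is bounded, furthermore $(\lambda_1+1)^2\|(H_1+1)^{-1}-(H_2+1)^{-1}\|\le\|H_1+1\|^2\,\|(H_1+1)^{-1}-(H_2+1)^{-1}\|$.
   Context: When $\mathcal{H}_1\ne\mathcal{H}$, $(H_1+1)^{-1}$ is to be read as the operator $(H_1+1)^{-1}\oplus 0$ on $\mathcal{H}=\mathcal{H}_1\oplus\mathcal{H}_1^\perp$. *)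

theory Defs
  imports "HOL-Analysis.Analysis"
begin

text \<open>A (possibly unbounded) linear operator on a closed subspace S of a real Hilbert
space is given by a domain D and a function A (only its values on D matter).\<close>

definition lin_op_on :: "'a::real_inner set \<Rightarrow> 'a set \<Rightarrow> ('a \<Rightarrow> 'a) \<Rightarrow> bool" where
  "lin_op_on S D A \<longleftrightarrow> subspace D \<and> D \<subseteq> S \<and> (\<forall>x\<in>D. A x \<in> S) \<and>
     (\<forall>x\<in>D. \<forall>y\<in>D. A (x + y) = A x + A y) \<and> (\<forall>c. \<forall>x\<in>D. A (c *\<^sub>R x) = c *\<^sub>R A x)"

text \<open>Selfadjoint: densely defined in S, symmetric, and the adjoint domain is contained in D
(so A = A^*).\<close>

definition selfadjoint_on :: "'a::real_inner set \<Rightarrow> 'a set \<Rightarrow> ('a \<Rightarrow> 'a) \<Rightarrow> bool" where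
  "selfadjoint_on S D A \<longleftrightarrow> lin_op_on S D A \<and> S \<subseteq> closure D \<and>
     (\<forall>x\<in>D. \<forall>y\<in>D. A x \<bullet> y = x \<bullet> A y) \<and>
     (\<forall>y\<in>S. (\<exists>z\<in>S. \<forall>x\<in>D. A x \<bullet> y = x \<bullet> z) \<longrightarrow> y \<in> D)"

definition nonneg_on :: "'a::real_inner set \<Rightarrow> ('a \<Rightarrow> 'a) \<Rightarrow> bool" where
  "nonneg_on D A \<longleftrightarrow> (\<forall>x\<in>D. 0 \<le> A x \<bullet> x)"

definition resolvent_set_on :: "'a::real_inner set \<Rightarrow> 'a set \<Rightarrow> ('a \<Rightarrow> 'a) \<Rightarrow> real set" where
  "resolvent_set_on S D A = {\<mu>. bij_betw (\<lambda>x. A x - \<mu> *\<^sub>R x) D S \<and>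
     (\<exists>C. \<forall>x\<in>D. norm x \<le> C * norm (A x - \<mu> *\<^sub>R x))}"

definition spectrum_on :: "'a::real_inner set \<Rightarrow> 'a set \<Rightarrow> ('a \<Rightarrow> 'a) \<Rightarrow> real set" where
  "spectrum_on S D A = - resolvent_set_on S D A"

definition proj_on :: "'a::real_inner set \<Rightarrow> 'a \<Rightarrow> 'a" where
  "proj_on S x = (THE p. p \<in> S \<and> (\<forall>s\<in>S. (x - p) \<bullet> s = 0))"

text \<open>The operator (A + 1)^{-1} on S, extended by 0 on the orthogonal complement of S,
i.e. (A+1)^{-1} composed with the orthogonal projection onto S.\<close>

definition resolvent1_ext :: "'a::real_inner set \<Rightarrow> 'a set \<Rightarrow> ('a \<Rightarrow> 'a) \<Rightarrow> 'a \<Rightarrow> 'a" where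
  "resolvent1_ext S D A x = (THE y. y \<in> D \<and> A y + y = proj_on S x)"

definition bounded_op_on :: "'a::real_normed_vector set \<Rightarrow> ('a \<Rightarrow> 'a) \<Rightarrow> bool" where
  "bounded_op_on D A \<longleftrightarrow> (\<exists>C. \<forall>x\<in>D. norm (A x) \<le> C * norm x)"

definition op_norm_on :: "'a::real_normed_vector set \<Rightarrow> ('a \<Rightarrow> 'a) \<Rightarrow> real" where
  "op_norm_on D T = Sup ((\<lambda>x. norm (T x)) ` {x\<in>D. norm x = 1})"

end

theory Submission
  imports Defs
begin

text \<open>Write \<open>R\<^sub>i = (H\<^sub>i + 1)\<^sup>-\<^sup>1\<close> and \<open>N = \<parallel>R\<^sub>1 - R\<^sub>2\<parallel>\<close>. The bottom of the spectrum of a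
  nonnegative selfadjoint operator is the bottom of its numerical range, so \<open>H\<^sub>1 \<ge> \<lambda>\<^sub>1\<close> and hence
  \<open>\<parallel>R\<^sub>1\<parallel> \<le> 1/(\<lambda>\<^sub>1 + 1)\<close>; by the triangle inequality \<open>\<parallel>R\<^sub>2\<parallel> \<le> K := 1/(\<lambda>\<^sub>1 + 1) + N\<close>.
  A nonnegative selfadjoint operator whose inverse has norm at most \<open>K\<close> is bounded below
  by \<open>1/K\<close> (Cauchy--Schwarz for the form \<open>\<langle>(H\<^sub>2 + 1) u, v\<rangle>\<close>), so \<open>\<lambda>\<^sub>2 + 1 \<ge> 1/K\<close>, which
  rearranges to \<open>\<lambda>\<^sub>1 - \<lambda>\<^sub>2 \<le> N (\<lambda>\<^sub>1 + 1)(\<lambda>\<^sub>2 + 1) \<le> N (\<lambda>\<^sub>1 + 1)\<^sup>2\<close>. Finally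
  \<open>\<parallel>H\<^sub>1 + 1\<parallel> \<ge> \<lambda>\<^sub>1 + 1\<close> because \<open>H\<^sub>1 + 1 \<ge> \<lambda>\<^sub>1 + 1\<close>.\<close>

section \<open>Orthogonal projection onto a closed subspace\<close>

lemma parallelogram_midpoint:
  fixes x a b :: "'a::real_inner"
  shows "norm (a - b)^2 = 2 * norm (x - a)^2 + 2 * norm (x - b)^2 - 4 * norm (x - midpoint a b)^2"
proof -
  have "x - midpoint a b = (1/2) *\<^sub>R ((x - a) + (x - b))"
    by (simp add: midpoint_def algebra_simps flip: scaleR_add_left)
  then have "4 * norm (x - midpoint a b)^2 = norm ((x - a) + (x - b))^2"
    by (simp add: power2_eq_square)
  moreover have "a - b = (x - b) - (x - a)" by simp
  ultimately show ?thesis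
    by (simp only: power2_norm_eq_inner inner_add_left inner_add_right inner_diff_left inner_diff_right)
       (simp add: inner_commute[of "x-a" "x-b"])
qed

lemma convex_minimizing_sequence_Cauchy:
  fixes M :: "'a::real_inner set"
  assumes "convex M" and pM: "\<And>n. p n \<in> M"
    and lower: "\<And>q. q \<in> M \<Longrightarrow> d \<le> norm (x - q)"
    and lim: "(\<lambda>n. norm (x - p n)) \<longlonglongrightarrow> d"
  shows "Cauchy p"
proof (rule CauchyI)
  have "0 \<le> d" using lim by (rule LIMSEQ_le_const) simp
  fix \<epsilon> :: real assume "0 < \<epsilon>"
  have "(\<lambda>n. norm (x - p n)^2) \<longlonglongrightarrow> d^2" by (intro tendsto_intros lim)
  then have "eventually (\<lambda>n. norm (x - p n)^2 < d^2 + \<epsilon>^2 / 4) sequentially"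
    using \<open>0 < \<epsilon>\<close> by (intro order_tendstoD(2)) auto
  then obtain N where N: "\<And>n. n \<ge> N \<Longrightarrow> norm (x - p n)^2 < d^2 + \<epsilon>^2 / 4"
    by (auto simp: eventually_sequentially)
  have "norm (p m - p n) < \<epsilon>" if "m \<ge> N" "n \<ge> N" for m n
  proof -
    have "midpoint (p m) (p n) \<in> M"
      using \<open>convex M\<close> pM by (simp add: midpoint_def convexD scaleR_right_distrib)
    then have "d^2 \<le> norm (x - midpoint (p m) (p n))^2"
      using \<open>0 \<le> d\<close> lower by (simp add: power_mono)
    then have "norm (p m - p n)^2 < \<epsilon>^2"
      using parallelogram_midpoint[of "p m" "p n" x] N[OF that(1)] N[OF that(2)] by linarith
    then show ?thesis using \<open>0 < \<epsilon>\<close> by (simp add: power_less_imp_less_base)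
  qed
  then show "\<exists>N. \<forall>m\<ge>N. \<forall>n\<ge>N. norm (p m - p n) < \<epsilon>" by blast
qed

lemma closest_point_exists_complete:
  fixes M :: "'a::{real_inner,complete_space} set"
  assumes "convex M" "closed M" "M \<noteq> {}"
  obtains q where "q \<in> M" "\<And>s. s \<in> M \<Longrightarrow> norm (x - q) \<le> norm (x - s)"
proof -
  define d where "d = infdist x M"
  have lower: "d \<le> norm (x - s)" if "s \<in> M" for s
    using infdist_le[OF that, of x] by (simp add: d_def dist_norm)
  have "\<exists>p\<in>M. norm (x - p) < d + 1 / Suc n" for n
  proof -
    have "(INF a\<in>M. dist x a) < d + 1 / Suc n"
      using \<open>M \<noteq> {}\<close> by (simp add: d_def infdist_notempty)
    then show ?thesis
      by (subst (asm) cINF_less_iff) (use \<open>M \<noteq> {}\<close> in \<open>auto simp: dist_norm intro: bdd_belowI[of _ 0]\<close>)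
  qed
  then obtain p where pM: "\<And>n. p n \<in> M" and pd: "\<And>n. norm (x - p n) < d + 1 / Suc n"
    by metis
  have lim: "(\<lambda>n. norm (x - p n)) \<longlonglongrightarrow> d"
  proof (rule tendsto_sandwich[where f="\<lambda>_. d"])
    show "eventually (\<lambda>n. d \<le> norm (x - p n)) sequentially"
      by (intro always_eventually allI lower pM)
    show "eventually (\<lambda>n. norm (x - p n) \<le> d + 1 / Suc n) sequentially"
      by (intro always_eventually allI less_imp_le pd)
    show "(\<lambda>n. d + 1 / Suc n) \<longlonglongrightarrow> d"
      using LIMSEQ_inverse_real_of_nat_add[of d] by (simp add: inverse_eq_divide)
  qed simp
  then obtain q where pq: "p \<longlonglongrightarrow> q"
    using convex_minimizing_sequence_Cauchy[OF \<open>convex M\<close> pM lower lim]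
    by (auto simp: Cauchy_convergent_iff convergent_def)
  have "q \<in> M" using closed_sequentially[OF \<open>closed M\<close> pM pq] .
  moreover have "(\<lambda>n. norm (x - p n)) \<longlonglongrightarrow> norm (x - q)"
    by (intro tendsto_intros pq)
  then have "norm (x - q) = d" using lim by (rule LIMSEQ_unique)
  ultimately show ?thesis using lower by (intro that) auto
qed

lemma closest_point_orthogonal:
  fixes M :: "'a::real_inner set"
  assumes "subspace M" "q \<in> M" and qmin: "\<And>s. s \<in> M \<Longrightarrow> norm (x - q) \<le> norm (x - s)"
    and "s \<in> M"
  shows "(x - q) \<bullet> s = 0"
proof (cases "s = 0")
  case False
  define c where "c = (x - q) \<bullet> s"
  define t where "t = c / (s \<bullet> s)"
  have ss: "0 < s \<bullet> s" using False by simp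
  have "q + t *\<^sub>R s \<in> M" using assms by (simp add: subspace_add subspace_scale)
  from qmin[OF this] have "(x - q) \<bullet> (x - q) \<le> (x - q - t *\<^sub>R s) \<bullet> (x - q - t *\<^sub>R s)"
    by (simp add: norm_le algebra_simps)
  then have "0 \<le> t * t * (s \<bullet> s) - 2 * t * c"
    by (simp add: c_def inner_diff_left inner_diff_right inner_commute algebra_simps)
  then have "c * c \<le> 0"
    using ss by (simp add: t_def field_simps)
  then have "c = 0" by (auto simp: mult_le_0_iff)
  then show ?thesis by (simp add: c_def)
qed simp

lemma proj_on_ex1:
  fixes S :: "'a::{real_inner,complete_space} set"
  assumes "subspace S" "closed S"
  shows "\<exists>!p. p \<in> S \<and> (\<forall>s\<in>S. (x - p) \<bullet> s = 0)"
proof -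
  have "S \<noteq> {}" using subspace_0[OF assms(1)] by blast
  then obtain p where p: "p \<in> S" "\<And>s. s \<in> S \<Longrightarrow> norm (x - p) \<le> norm (x - s)"
    using closest_point_exists_complete[OF subspace_imp_convex[OF assms(1)] assms(2)] by blast
  then have orth: "\<forall>s\<in>S. (x - p) \<bullet> s = 0"
    using closest_point_orthogonal[OF \<open>subspace S\<close>] by blast
  have "q = p" if q: "q \<in> S" "\<forall>s\<in>S. (x - q) \<bullet> s = 0" for q
  proof -
    have "p - q \<in> S" using \<open>subspace S\<close> p q by (simp add: subspace_diff)
    then have "(x - q) \<bullet> (p - q) - (x - p) \<bullet> (p - q) = 0" using orth q by simp
    then have "(p - q) \<bullet> (p - q) = 0" by (simp add: algebra_simps inner_diff_left)
    then show ?thesis by simp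
  qed
  with p orth show ?thesis by blast
qed

lemma
  fixes S :: "'a::{real_inner,complete_space} set"
  assumes "subspace S" "closed S"
  shows proj_on_in: "proj_on S x \<in> S"
    and proj_on_orthogonal: "s \<in> S \<Longrightarrow> (x - proj_on S x) \<bullet> s = 0"
  using theI'[OF proj_on_ex1[OF assms, of x]] unfolding proj_on_def by auto

lemma proj_on_eqI:
  fixes S :: "'a::{real_inner,complete_space} set"
  assumes "subspace S" "closed S" "p \<in> S" "\<And>s. s \<in> S \<Longrightarrow> (x - p) \<bullet> s = 0"
  shows "proj_on S x = p"
  unfolding proj_on_def by (rule the1_equality[OF proj_on_ex1[OF assms(1,2)]]) (use assms(3,4) in auto)

lemma proj_on_id:
  fixes S :: "'a::{real_inner,complete_space} set"
  assumes "subspace S" "closed S" "x \<in> S"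
  shows "proj_on S x = x"
  using assms by (intro proj_on_eqI) auto

lemma linear_proj_on:
  fixes S :: "'a::{real_inner,complete_space} set"
  assumes "subspace S" "closed S"
  shows "linear (proj_on S)"
proof (rule linearI)
  note P = proj_on_in[OF assms] proj_on_orthogonal[OF assms]
  show "proj_on S (x + y) = proj_on S x + proj_on S y" for x y
  proof (intro proj_on_eqI assms)
    show "proj_on S x + proj_on S y \<in> S" using P \<open>subspace S\<close> by (simp add: subspace_add)
    show "(x + y - (proj_on S x + proj_on S y)) \<bullet> s = 0" if "s \<in> S" for s
      using P(2)[OF that, of x] P(2)[OF that, of y] by (simp add: algebra_simps inner_diff_left inner_add_left)
  qed
  show "proj_on S (c *\<^sub>R x) = c *\<^sub>R proj_on S x" for c x
  proof (intro proj_on_eqI assms)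
    show "c *\<^sub>R proj_on S x \<in> S" using P \<open>subspace S\<close> by (simp add: subspace_scale)
    show "(c *\<^sub>R x - c *\<^sub>R proj_on S x) \<bullet> s = 0" if "s \<in> S" for s
      using P(2)[OF that, of x] by (simp flip: scaleR_diff_right)
  qed
qed

lemma norm_proj_on_le:
  fixes S :: "'a::{real_inner,complete_space} set"
  assumes "subspace S" "closed S"
  shows "norm (proj_on S x) \<le> norm x"
proof -
  let ?p = "proj_on S x"
  have "?p \<bullet> ?p = x \<bullet> ?p"
    using proj_on_orthogonal[OF assms proj_on_in[OF assms]] by (simp add: inner_diff_left)
  also have "\<dots> \<le> norm x * norm ?p" by (rule norm_cauchy_schwarz)
  finally have "norm ?p * norm ?p \<le> norm x * norm ?p" by (simp add: dot_square_norm power2_eq_square)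
  then show ?thesis by (cases "norm ?p = 0") (auto simp: mult_le_cancel_right)
qed

lemma lin_op_onD:
  assumes "lin_op_on S D A"
  shows "subspace D" "D \<subseteq> S" "x \<in> D \<Longrightarrow> A x \<in> S"
    "x \<in> D \<Longrightarrow> y \<in> D \<Longrightarrow> A (x + y) = A x + A y"
    "x \<in> D \<Longrightarrow> A (c *\<^sub>R x) = c *\<^sub>R A x"
  using assms unfolding lin_op_on_def by auto

lemma lin_op_on_diff:
  assumes "lin_op_on S D A" "x \<in> D" "y \<in> D"
  shows "A (x - y) = A x - A y"
proof -
  have "- y \<in> D" using lin_op_onD(1)[OF assms(1)] assms(3) by (simp add: subspace_neg)
  then have "A (x - y) = A x + A (- y)" using lin_op_onD(4)[OF assms(1,2)] by fastforce
  then show ?thesis using lin_op_onD(5)[OF assms(1,3), of "-1"] by simp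
qed

lemma lin_op_on_zero:
  assumes "lin_op_on S D A"
  shows "A 0 = 0"
proof -
  have "0 \<in> D" using lin_op_onD(1)[OF assms] by (rule subspace_0)
  from lin_op_onD(5)[OF assms this, of 0] show ?thesis by simp
qed

lemma selfadjoint_onD:
  assumes "selfadjoint_on S D A"
  shows "lin_op_on S D A" "S \<subseteq> closure D" "x \<in> D \<Longrightarrow> y \<in> D \<Longrightarrow> A x \<bullet> y = x \<bullet> A y"
    "y \<in> S \<Longrightarrow> z \<in> S \<Longrightarrow> (\<And>x. x \<in> D \<Longrightarrow> A x \<bullet> y = x \<bullet> z) \<Longrightarrow> y \<in> D"
  using assms unfolding selfadjoint_on_def by blast+

lemma lin_op_on_shift:
  assumes "subspace S" "lin_op_on S D A"
  shows "lin_op_on S D (\<lambda>x. A x - \<mu> *\<^sub>R x)"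
  using assms lin_op_onD[OF assms(2)]
  unfolding lin_op_on_def by (auto simp: subspace_diff subspace_scale algebra_simps subset_eq)

lemma selfadjoint_on_shift:
  assumes "subspace S" "selfadjoint_on S D A"
  shows "selfadjoint_on S D (\<lambda>x. A x - \<mu> *\<^sub>R x)"
  unfolding selfadjoint_on_def
proof (intro conjI ballI impI)
  note A = selfadjoint_onD[OF assms(2)]
  show "lin_op_on S D (\<lambda>x. A x - \<mu> *\<^sub>R x)" by (rule lin_op_on_shift[OF assms(1) A(1)])
  show "S \<subseteq> closure D" by (rule A(2))
  show "(A x - \<mu> *\<^sub>R x) \<bullet> y = x \<bullet> (A y - \<mu> *\<^sub>R y)" if "x \<in> D" "y \<in> D" for x y
    using A(3)[OF that] by (simp add: inner_diff_left inner_diff_right inner_commute)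
  show "y \<in> D" if yS: "y \<in> S" and ex: "\<exists>z\<in>S. \<forall>x\<in>D. (A x - \<mu> *\<^sub>R x) \<bullet> y = x \<bullet> z" for y
  proof -
    obtain z where "z \<in> S" and z: "\<And>x. x \<in> D \<Longrightarrow> (A x - \<mu> *\<^sub>R x) \<bullet> y = x \<bullet> z"
      using ex by blast
    show "y \<in> D"
    proof (rule A(4)[OF yS])
      show "z + \<mu> *\<^sub>R y \<in> S" using assms(1) \<open>z \<in> S\<close> yS by (simp add: subspace_add subspace_scale)
      show "A x \<bullet> y = x \<bullet> (z + \<mu> *\<^sub>R y)" if "x \<in> D" for x
        using z[OF that] by (simp add: inner_diff_left inner_add_right)
    qed
  qed
qed

section \<open>Operators bounded below\<close>

lemma norm_ge_if_form_lower_bound: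
  fixes B :: "'a::real_inner \<Rightarrow> 'a"
  assumes "0 < \<delta>" "\<delta> * (y \<bullet> y) \<le> B y \<bullet> y"
  shows "\<delta> * norm y \<le> norm (B y)"
proof (cases "y = 0")
  case False
  have "\<delta> * norm y * norm y \<le> B y \<bullet> y"
    using assms(2) by (simp add: dot_square_norm power2_eq_square mult.assoc)
  also have "\<dots> \<le> norm (B y) * norm y" by (rule norm_cauchy_schwarz)
  finally show ?thesis using False by (simp add: mult_le_cancel_right)
qed simp

lemma orthogonal_dense_eq_0:
  fixes v :: "'a::real_inner"
  assumes "S \<subseteq> closure D" "v \<in> S" "\<And>x. x \<in> D \<Longrightarrow> v \<bullet> x = 0"
  shows "v = 0"
proof -
  have "closure D \<subseteq> {w. v \<bullet> w = 0}"
    using assms(3) by (intro closure_minimal) (auto intro: closed_hyperplane)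
  with assms(1,2) have "v \<bullet> v = 0" by auto
  then show ?thesis by simp
qed

lemma selfadjoint_on_graph_closed:
  assumes "subspace S" "closed S" "selfadjoint_on S D B"
    and yD: "\<And>n. y n \<in> D" and ylim: "y \<longlonglongrightarrow> y0" and Bylim: "(\<lambda>n. B (y n)) \<longlonglongrightarrow> f"
  shows "y0 \<in> D \<and> B y0 = f"
proof -
  note B = selfadjoint_onD[OF assms(3)]
  note L = lin_op_onD[OF B(1)]
  have y0S: "y0 \<in> S" using closed_sequentially[OF assms(2) _ ylim] L(2) yD by blast
  have fS: "f \<in> S" using closed_sequentially[OF assms(2) _ Bylim] L(3) yD by blast
  have adj: "B x \<bullet> y0 = x \<bullet> f" if "x \<in> D" for x
  proof (rule LIMSEQ_unique)
    show "(\<lambda>n. B x \<bullet> y n) \<longlonglongrightarrow> B x \<bullet> y0" by (intro tendsto_intros ylim)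
    show "(\<lambda>n. B x \<bullet> y n) \<longlonglongrightarrow> x \<bullet> f"
      unfolding B(3)[OF that yD] by (intro tendsto_intros Bylim)
  qed
  have y0D: "y0 \<in> D" using B(4)[OF y0S fS adj] .
  have "B y0 - f = 0"
  proof (rule orthogonal_dense_eq_0[OF B(2)])
    show "B y0 - f \<in> S" using assms(1) L(3)[OF y0D] fS by (simp add: subspace_diff)
    show "(B y0 - f) \<bullet> x = 0" if "x \<in> D" for x
      using adj[OF that] B(3)[OF y0D that] by (simp add: inner_diff_left) (metis inner_commute)
  qed
  with y0D show ?thesis by simp
qed

lemma closed_image_if_bounded_below:
  fixes S :: "'a::{real_inner,complete_space} set"
  assumes "subspace S" "closed S" "selfadjoint_on S D B"
    and "0 < \<delta>" and bound: "\<And>y. y \<in> D \<Longrightarrow> \<delta> * norm y \<le> norm (B y)"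
  shows "closed (B ` D)"
  unfolding closed_sequential_limits
proof (intro allI impI, elim conjE)
  fix x f assume "\<forall>n. x n \<in> B ` D" and xlim: "x \<longlonglongrightarrow> f"
  then have "\<forall>n. \<exists>z\<in>D. x n = B z" by blast
  then obtain y where yD: "\<And>n. y n \<in> D" and xy: "\<And>n. x n = B (y n)"
    by metis
  note L = lin_op_onD[OF selfadjoint_onD(1)[OF assms(3)]]
  have "Cauchy y"
  proof (rule CauchyI)
    fix e :: real assume "0 < e"
    obtain N where N: "\<forall>m\<ge>N. \<forall>n\<ge>N. norm (x m - x n) < \<delta> * e"
      using CauchyD[OF LIMSEQ_imp_Cauchy[OF xlim], of "\<delta> * e"] \<open>0 < \<delta>\<close> \<open>0 < e\<close> by auto
    have "\<delta> * norm (y m - y n) < \<delta> * e" if "m \<ge> N" "n \<ge> N" for m n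
    proof -
      have "y m - y n \<in> D" using L(1) yD by (simp add: subspace_diff)
      from bound[OF this] have "\<delta> * norm (y m - y n) \<le> norm (x m - x n)"
        using lin_op_on_diff[OF selfadjoint_onD(1)[OF assms(3)] yD yD] xy by simp
      also have "\<dots> < \<delta> * e" using N that by auto
      finally show ?thesis .
    qed
    then show "\<exists>N. \<forall>m\<ge>N. \<forall>n\<ge>N. norm (y m - y n) < e" using \<open>0 < \<delta>\<close> by auto
  qed
  then obtain y0 where ylim: "y \<longlonglongrightarrow> y0" by (auto simp: Cauchy_convergent_iff convergent_def)
  have "x = (\<lambda>n. B (y n))" using xy by blast
  with xlim have "(\<lambda>n. B (y n)) \<longlonglongrightarrow> f" by simp
  with selfadjoint_on_graph_closed[OF assms(1-3) yD ylim] show "f \<in> B ` D" by auto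
qed

lemma subspace_image_lin_op_on:
  assumes "lin_op_on S D B"
  shows "subspace (B ` D)"
  unfolding subspace_def
proof (intro conjI ballI allI)
  note L = lin_op_onD[OF assms]
  show "0 \<in> B ` D" using lin_op_on_zero[OF assms] subspace_0[OF L(1)] by force
  show "u + v \<in> B ` D" if u: "u \<in> B ` D" and v: "v \<in> B ` D" for u v
  proof -
    obtain a b where "a \<in> D" "b \<in> D" "u = B a" "v = B b" using u v by blast
    then show ?thesis using L(4) subspace_add[OF L(1)] by (metis image_eqI)
  qed
  show "c *\<^sub>R u \<in> B ` D" if u: "u \<in> B ` D" for c u
  proof -
    obtain a where "a \<in> D" "u = B a" using u by blast
    then show ?thesis using L(5) subspace_scale[OF L(1)] by (metis image_eqI)
  qed
qed

lemma selfadjoint_on_bij_betw_if_form_lower_bound: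
  fixes S :: "'a::{real_inner,complete_space} set"
  assumes "subspace S" "closed S" "selfadjoint_on S D B"
    and "0 < \<delta>" and lower: "\<And>y. y \<in> D \<Longrightarrow> \<delta> * (y \<bullet> y) \<le> B y \<bullet> y"
  shows "bij_betw B D S"
proof -
  note Bs = selfadjoint_onD[OF assms(3)]
  note L = lin_op_onD[OF Bs(1)]
  have bound: "\<delta> * norm y \<le> norm (B y)" if "y \<in> D" for y
    using norm_ge_if_form_lower_bound[of \<delta> y B] \<open>0 < \<delta>\<close> lower[OF that] by blast
  have "inj_on B D"
  proof (rule inj_onI)
    fix x y assume xy: "x \<in> D" "y \<in> D" "B x = B y"
    have "x - y \<in> D" using L(1) xy by (simp add: subspace_diff)
    from bound[OF this] have "\<delta> * norm (x - y) \<le> 0"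
      using lin_op_on_diff[OF Bs(1) xy(1,2)] xy(3) by simp
    then show "x = y" using \<open>0 < \<delta>\<close> by (simp add: mult_le_0_iff)
  qed
  moreover have "B ` D = S"
  proof
    show "B ` D \<subseteq> S" using L(3) by blast
    let ?M = "B ` D"
    have M: "subspace ?M" "closed ?M"
      using subspace_image_lin_op_on[OF Bs(1)] closed_image_if_bounded_below[OF assms(1-4) bound]
      by auto
    show "S \<subseteq> ?M"
    proof
      fix f assume "f \<in> S"
      define r where "r = f - proj_on ?M f"
      have r_orth: "r \<bullet> B x = 0" if "x \<in> D" for x
        using proj_on_orthogonal[OF M, of "B x" f] that by (simp add: r_def)
      have rS: "r \<in> S"
        using \<open>f \<in> S\<close> proj_on_in[OF M, of f] L(3) assms(1) by (auto simp: r_def subspace_diff)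
      have "r \<in> D"
      proof (rule Bs(4)[OF rS])
        show "0 \<in> S" using assms(1) by (rule subspace_0)
        show "B x \<bullet> r = x \<bullet> 0" if "x \<in> D" for x using r_orth[OF that] by (simp add: inner_commute)
      qed
      with lower[of r] r_orth[of r] \<open>0 < \<delta>\<close> have "r \<bullet> r \<le> 0"
        by (simp add: inner_commute mult_le_0_iff)
      then have "r = 0" by (metis inner_eq_zero_iff inner_ge_zero order_antisym)
      then show "f \<in> ?M" using proj_on_in[OF M, of f] by (simp add: r_def)
    qed
  qed
  ultimately show ?thesis by (simp add: bij_betw_def)
qed

lemma resolvent_set_on_if_form_lower_bound:
  fixes S :: "'a::{real_inner,complete_space} set"
  assumes "subspace S" "closed S" "selfadjoint_on S D A"
    and lower: "\<And>y. y \<in> D \<Longrightarrow> c * (y \<bullet> y) \<le> A y \<bullet> y" and "\<mu> < c"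
  shows "\<mu> \<in> resolvent_set_on S D A"
proof -
  define B where "B x = A x - \<mu> *\<^sub>R x" for x
  have "selfadjoint_on S D B"
    unfolding B_def[abs_def] by (rule selfadjoint_on_shift[OF assms(1,3)])
  have lowerB: "(c - \<mu>) * (y \<bullet> y) \<le> B y \<bullet> y" if "y \<in> D" for y
    using lower[OF that] by (simp add: B_def inner_diff_left algebra_simps)
  have "bij_betw B D S"
    using \<open>\<mu> < c\<close> by (intro selfadjoint_on_bij_betw_if_form_lower_bound[OF assms(1,2) \<open>selfadjoint_on S D B\<close> _ lowerB]) auto
  moreover have "norm y \<le> 1 / (c - \<mu>) * norm (B y)" if "y \<in> D" for y
    using norm_ge_if_form_lower_bound[of "c - \<mu>" y B] lowerB[OF that] \<open>\<mu> < c\<close>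
    by (simp add: field_simps)
  ultimately show ?thesis unfolding resolvent_set_on_def B_def by blast
qed

lemma spectrum_on_ge_if_form_lower_bound:
  fixes S :: "'a::{real_inner,complete_space} set"
  assumes "subspace S" "closed S" "selfadjoint_on S D A"
    and "\<And>y. y \<in> D \<Longrightarrow> c * (y \<bullet> y) \<le> A y \<bullet> y" and "\<mu> \<in> spectrum_on S D A"
  shows "c \<le> \<mu>"
  using resolvent_set_on_if_form_lower_bound[OF assms(1-4), of \<mu>] assms(5)
  by (force simp: spectrum_on_def)

lemma discriminant_le_if_quadratic_nonneg:
  fixes a b c :: real
  assumes "0 \<le> a" and nonneg: "\<And>t. 0 \<le> c - 2 * t * b + t * t * a"
  shows "b * b \<le> a * c"
proof (cases "a = 0")
  case True
  have "b = 0"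
  proof (rule ccontr)
    assume "b \<noteq> 0"
    with nonneg[of "(c + 1) / (2 * b)"] True show False by (simp add: field_simps)
  qed
  with True show ?thesis by simp
next
  case False
  with nonneg[of "b / a"] \<open>0 \<le> a\<close> show ?thesis by (simp add: field_simps power2_eq_square)
qed

text \<open>Cauchy--Schwarz for the semi-inner product \<open>\<langle>B u, v\<rangle>\<close>, applied to \<open>w\<close> and \<open>y = B w\<close>.\<close>

lemma inner_le_form_if_inverse_bound:
  assumes "lin_op_on S D B" and sym: "\<And>x y. x \<in> D \<Longrightarrow> y \<in> D \<Longrightarrow> B x \<bullet> y = x \<bullet> B y"
    and "nonneg_on D B" and "y \<in> D" "w \<in> D" "B w = y" and "norm w \<le> K * norm y"
  shows "y \<bullet> y \<le> K * (B y \<bullet> y)"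
proof -
  note L = lin_op_onD[OF assms(1)]
  have nn: "0 \<le> B x \<bullet> x" if "x \<in> D" for x using \<open>nonneg_on D B\<close> that by (simp add: nonneg_on_def)
  have quadratic: "0 \<le> B y \<bullet> y - 2 * t * (y \<bullet> y) + t * t * (y \<bullet> w)" for t
  proof -
    have v: "y - t *\<^sub>R w \<in> D" using L(1) \<open>y \<in> D\<close> \<open>w \<in> D\<close> by (simp add: subspace_diff subspace_scale)
    have "B (y - t *\<^sub>R w) = B y - t *\<^sub>R y"
      using lin_op_on_diff[OF assms(1) \<open>y \<in> D\<close>] L(1,5) \<open>w \<in> D\<close> \<open>B w = y\<close> by (simp add: subspace_scale)
    with nn[OF v] have "0 \<le> (B y - t *\<^sub>R y) \<bullet> (y - t *\<^sub>R w)" by simp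
    moreover have "B y \<bullet> w = y \<bullet> y" using sym[OF \<open>y \<in> D\<close> \<open>w \<in> D\<close>] \<open>B w = y\<close> by simp
    ultimately show ?thesis by (simp add: inner_diff_left inner_diff_right algebra_simps)
  qed
  have "0 \<le> y \<bullet> w" using nn[OF \<open>w \<in> D\<close>] \<open>B w = y\<close> by simp
  from discriminant_le_if_quadratic_nonneg[OF this quadratic]
  have "(y \<bullet> y) * (y \<bullet> y) \<le> (y \<bullet> w) * (B y \<bullet> y)" .
  also have "\<dots> \<le> (K * (y \<bullet> y)) * (B y \<bullet> y)"
  proof (rule mult_right_mono)
    have "y \<bullet> w \<le> norm y * norm w" by (rule norm_cauchy_schwarz)
    also have "\<dots> \<le> norm y * (K * norm y)"
      using \<open>norm w \<le> K * norm y\<close> by (simp add: mult_left_mono)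
    also have "\<dots> = K * (y \<bullet> y)" by (simp add: dot_square_norm power2_eq_square)
    finally show "y \<bullet> w \<le> K * (y \<bullet> y)" .
    show "0 \<le> B y \<bullet> y" using nn[OF \<open>y \<in> D\<close>] .
  qed
  finally have "(y \<bullet> y) * (y \<bullet> y) \<le> (K * (B y \<bullet> y)) * (y \<bullet> y)" by (simp add: algebra_simps)
  then show ?thesis by (cases "y = 0") (auto simp: mult_le_cancel_right)
qed

lemma form_lower_bound_if_resolvent_set:
  assumes "subspace S" "selfadjoint_on S D A" "\<mu> \<in> resolvent_set_on S D A"
    and lower: "\<And>y. y \<in> D \<Longrightarrow> \<mu> * (y \<bullet> y) \<le> A y \<bullet> y"
  obtains C where "\<And>y. y \<in> D \<Longrightarrow> y \<bullet> y \<le> C * ((A y - \<mu> *\<^sub>R y) \<bullet> y)"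
proof -
  define B where "B x = A x - \<mu> *\<^sub>R x" for x
  note Bs = selfadjoint_onD[OF selfadjoint_on_shift[OF assms(1,2), of \<mu>, folded B_def]]
  obtain C where bij: "bij_betw B D S" and C: "\<And>x. x \<in> D \<Longrightarrow> norm x \<le> C * norm (B x)"
    using assms(3) unfolding resolvent_set_on_def B_def[abs_def] by auto
  have "nonneg_on D B"
    using lower by (simp add: nonneg_on_def B_def inner_diff_left)
  have "y \<bullet> y \<le> C * (B y \<bullet> y)" if "y \<in> D" for y
  proof -
    have "y \<in> S" using lin_op_onD(2)[OF Bs(1)] that by blast
    then obtain w where "w \<in> D" "B w = y" using bij by (auto simp: bij_betw_def)
    with C[OF \<open>w \<in> D\<close>] show ?thesis
      by (intro inner_le_form_if_inverse_bound[OF Bs(1) Bs(3) \<open>nonneg_on D B\<close> that]) auto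
  qed
  then show ?thesis by (intro that) (simp add: B_def)
qed

lemma form_lower_bound_if_unit:
  assumes "lin_op_on S D A" and unit: "\<And>x. x \<in> D \<Longrightarrow> x \<bullet> x = 1 \<Longrightarrow> c \<le> A x \<bullet> x"
    and "y \<in> D"
  shows "c * (y \<bullet> y) \<le> A y \<bullet> y"
proof (cases "y = 0")
  case True
  then show ?thesis using lin_op_on_zero[OF assms(1)] by simp
next
  case False
  define u where "u = (1 / norm y) *\<^sub>R y"
  have "u \<in> D" using lin_op_onD(1)[OF assms(1)] \<open>y \<in> D\<close> by (simp add: u_def subspace_scale)
  moreover have "u \<bullet> u = 1" using False by (simp add: u_def dot_square_norm)
  moreover have "A u \<bullet> u = (A y \<bullet> y) / (y \<bullet> y)"
    using lin_op_onD(5)[OF assms(1) \<open>y \<in> D\<close>] by (simp add: u_def dot_square_norm power2_eq_square)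
  ultimately show ?thesis using unit[of u] False by (simp add: le_divide_eq)
qed

text \<open>If some unit vector had \<open>\<langle>A x, x\<rangle> < l\<close>, the infimum \<open>m = Inf Q\<close> of the numerical range would lie
  below the spectrum, so \<open>A - m\<close> would be coercive, contradicting the choice of \<open>m\<close>.\<close>

lemma form_lower_bound_if_spectrum_on_min:
  fixes S :: "'a::{real_inner,complete_space} set"
  assumes "subspace S" "selfadjoint_on S D A" "nonneg_on D A"
    and "\<And>\<mu>. \<mu> \<in> spectrum_on S D A \<Longrightarrow> l \<le> \<mu>" and "y \<in> D"
  shows "l * (y \<bullet> y) \<le> A y \<bullet> y"
proof (rule form_lower_bound_if_unit[OF selfadjoint_onD(1)[OF assms(2)] _ \<open>y \<in> D\<close>])
  note lin = selfadjoint_onD(1)[OF assms(2)]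
  define Q where "Q = (\<lambda>x. A x \<bullet> x) ` {x \<in> D. x \<bullet> x = 1}"
  have Q_bdd: "bdd_below Q"
    using \<open>nonneg_on D A\<close> by (auto simp: Q_def nonneg_on_def intro: bdd_belowI[of _ 0])
  fix x assume x: "x \<in> D" "x \<bullet> x = 1"
  show "l \<le> A x \<bullet> x"
  proof (rule ccontr)
    assume "\<not> l \<le> A x \<bullet> x"
    have "A x \<bullet> x \<in> Q" using x by (auto simp: Q_def)
    then have "Q \<noteq> {}" and "Inf Q < l"
      using cInf_lower[OF _ Q_bdd] \<open>\<not> l \<le> A x \<bullet> x\<close> by fastforce+
    have m_lower: "Inf Q * (z \<bullet> z) \<le> A z \<bullet> z" if "z \<in> D" for z
      using Q_bdd by (intro form_lower_bound_if_unit[OF lin _ that] cInf_lower) (auto simp: Q_def)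
    have "Inf Q \<in> resolvent_set_on S D A"
      using assms(4) \<open>Inf Q < l\<close> by (force simp: spectrum_on_def)
    then obtain C where C: "\<And>z. z \<in> D \<Longrightarrow> z \<bullet> z \<le> C * ((A z - Inf Q *\<^sub>R z) \<bullet> z)"
      using form_lower_bound_if_resolvent_set[OF assms(1,2)] m_lower by blast
    have C_unit: "1 \<le> C * (A z \<bullet> z - Inf Q)" if "z \<in> D" "z \<bullet> z = 1" for z
      using C[OF that(1)] that(2) by (simp add: inner_diff_left)
    have "0 < C"
    proof (rule ccontr)
      assume "\<not> 0 < C"
      moreover have "0 \<le> A x \<bullet> x - Inf Q" using cInf_lower[OF \<open>A x \<bullet> x \<in> Q\<close> Q_bdd] by simp
      ultimately have "C * (A x \<bullet> x - Inf Q) \<le> 0" by (simp add: mult_nonpos_nonneg)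
      with C_unit[OF x] show False by simp
    qed
    have "Inf Q + 1 / C \<le> Inf Q"
    proof (rule cInf_greatest[OF \<open>Q \<noteq> {}\<close>])
      fix q assume "q \<in> Q"
      then obtain z where z: "z \<in> D" "z \<bullet> z = 1" "q = A z \<bullet> z" by (auto simp: Q_def)
      have "1 / C \<le> A z \<bullet> z - Inf Q"
        using C_unit[OF z(1,2)] \<open>0 < C\<close> by (simp add: pos_divide_le_eq mult.commute)
      with z(3) show "Inf Q + 1 / C \<le> q" by simp
    qed
    with \<open>0 < C\<close> show False by simp
  qed
qed

lemma spectrum_on_nonempty_imp_nonzero:
  assumes "subspace S" "selfadjoint_on S D A" "\<mu> \<in> spectrum_on S D A"
  obtains y where "y \<in> D" "y \<noteq> 0"
proof (rule ccontr)
  assume "\<not> thesis"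
  with that have "D = {0}" using subspace_0[OF lin_op_onD(1)[OF selfadjoint_onD(1)[OF assms(2)]]] by blast
  then have "S = {0}" using selfadjoint_onD(2)[OF assms(2)] subspace_0[OF assms(1)] by auto
  with \<open>D = {0}\<close> have "\<mu> \<in> resolvent_set_on S D A"
    using lin_op_on_zero[OF selfadjoint_onD(1)[OF assms(2)]]
    by (auto simp: resolvent_set_on_def bij_betw_def)
  with assms(3) show False by (simp add: spectrum_on_def)
qed

lemma op_norm_on_ge_if_form_lower_bound:
  assumes "subspace D" "bounded_op_on D B"
    and lower: "\<And>y. y \<in> D \<Longrightarrow> c * (y \<bullet> y) \<le> B y \<bullet> y" and "y \<in> D" "y \<noteq> 0"
  shows "c \<le> op_norm_on D B"
proof -
  define u where "u = (1 / norm y) *\<^sub>R y"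
  have u: "u \<in> {x \<in> D. norm x = 1}" using assms(1,4,5) by (simp add: u_def subspace_scale)
  obtain K where K: "\<And>x. x \<in> D \<Longrightarrow> norm (B x) \<le> K * norm x"
    using \<open>bounded_op_on D B\<close> by (auto simp: bounded_op_on_def)
  have "bdd_above ((\<lambda>x. norm (B x)) ` {x \<in> D. norm x = 1})"
  proof (rule bdd_aboveI[of _ K])
    fix t assume "t \<in> (\<lambda>x. norm (B x)) ` {x \<in> D. norm x = 1}"
    then show "t \<le> K" using K by force
  qed
  moreover have "c \<le> norm (B u)"
  proof -
    have "c = c * (u \<bullet> u)" using u by (simp add: dot_square_norm)
    also have "\<dots> \<le> B u \<bullet> u" using u lower by blast
    also have "\<dots> \<le> norm (B u) * norm u" by (rule norm_cauchy_schwarz)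
    finally show ?thesis using u by simp
  qed
  ultimately show ?thesis unfolding op_norm_on_def using u by (intro cSUP_upper2) auto
qed

section \<open>The resolvent \<open>(A + 1)\<^sup>-\<^sup>1\<close>\<close>

lemma resolvent1_ext_ex1:
  fixes S :: "'a::{real_inner,complete_space} set"
  assumes "subspace S" "closed S" "selfadjoint_on S D A" "nonneg_on D A"
  shows "\<exists>!y. y \<in> D \<and> A y + y = proj_on S x"
proof -
  have "-1 \<in> resolvent_set_on S D A"
    using assms by (intro resolvent_set_on_if_form_lower_bound[of S D A 0]) (auto simp: nonneg_on_def)
  then have "bij_betw (\<lambda>y. A y + y) D S" by (simp add: resolvent_set_on_def)
  moreover have "proj_on S x \<in> S" by (rule proj_on_in[OF assms(1,2)])
  ultimately show ?thesis by (auto simp: bij_betw_def inj_on_def)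
qed

lemma
  fixes S :: "'a::{real_inner,complete_space} set"
  assumes "subspace S" "closed S" "selfadjoint_on S D A" "nonneg_on D A"
  shows resolvent1_ext_in: "resolvent1_ext S D A x \<in> D"
    and resolvent1_ext_eq: "A (resolvent1_ext S D A x) + resolvent1_ext S D A x = proj_on S x"
  using theI'[OF resolvent1_ext_ex1[OF assms, of x]] unfolding resolvent1_ext_def by auto

lemma resolvent1_ext_eqI:
  fixes S :: "'a::{real_inner,complete_space} set"
  assumes "subspace S" "closed S" "selfadjoint_on S D A" "nonneg_on D A"
    and "y \<in> D" "A y + y = proj_on S x"
  shows "resolvent1_ext S D A x = y"
  unfolding resolvent1_ext_def
  by (rule the1_equality[OF resolvent1_ext_ex1[OF assms(1-4)]]) (use assms(5,6) in auto)

lemma norm_resolvent1_ext_le: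
  fixes S :: "'a::{real_inner,complete_space} set"
  assumes "subspace S" "closed S" "selfadjoint_on S D A" "nonneg_on D A"
    and lower: "\<And>y. y \<in> D \<Longrightarrow> c * (y \<bullet> y) \<le> A y \<bullet> y" and "0 \<le> c"
  shows "(c + 1) * norm (resolvent1_ext S D A x) \<le> norm x"
proof -
  let ?y = "resolvent1_ext S D A x"
  have yD: "?y \<in> D" by (rule resolvent1_ext_in[OF assms(1-4)])
  have "(c + 1) * (?y \<bullet> ?y) \<le> (A ?y + ?y) \<bullet> ?y" using lower[OF yD] by (simp add: inner_add_left algebra_simps)
  also have "\<dots> = proj_on S x \<bullet> ?y" by (simp add: resolvent1_ext_eq[OF assms(1-4)])
  also have "\<dots> \<le> norm (proj_on S x) * norm ?y" by (rule norm_cauchy_schwarz)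
  also have "\<dots> \<le> norm x * norm ?y" using norm_proj_on_le[OF assms(1,2)] by (simp add: mult_right_mono)
  finally have "((c + 1) * norm ?y) * norm ?y \<le> norm x * norm ?y"
    by (simp add: dot_square_norm power2_eq_square mult.assoc)
  then show ?thesis using \<open>0 \<le> c\<close> by (cases "norm ?y = 0") (auto simp: mult_le_cancel_right)
qed

lemma bounded_linear_resolvent1_ext:
  fixes S :: "'a::{real_inner,complete_space} set"
  assumes "subspace S" "closed S" "selfadjoint_on S D A" "nonneg_on D A"
  shows "bounded_linear (resolvent1_ext S D A)"
proof (rule bounded_linear_intro[where K=1])
  note lin = selfadjoint_onD(1)[OF assms(3)]
  note L = lin_op_onD[OF lin]
  note R = resolvent1_ext_in[OF assms] resolvent1_ext_eq[OF assms]
  note P = linear_add[OF linear_proj_on[OF assms(1,2)]] linear_scale[OF linear_proj_on[OF assms(1,2)]]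
  show "resolvent1_ext S D A (x + y) = resolvent1_ext S D A x + resolvent1_ext S D A y" for x y
    using R L(4)[OF R(1) R(1)] P(1) subspace_add[OF L(1) R(1) R(1)]
    by (intro resolvent1_ext_eqI[OF assms]) (auto simp: algebra_simps)
  show "resolvent1_ext S D A (r *\<^sub>R x) = r *\<^sub>R resolvent1_ext S D A x" for r x
    using R L(5)[OF R(1)] P(2) subspace_scale[OF L(1) R(1)]
    by (intro resolvent1_ext_eqI[OF assms]) (auto simp: scaleR_right_distrib[symmetric])
  show "norm (resolvent1_ext S D A x) \<le> norm x * 1" for x
    using norm_resolvent1_ext_le[OF assms, of 0 x] \<open>nonneg_on D A\<close> by (simp add: nonneg_on_def)
qed

lemma form_lower_bound_if_resolvent1_ext_bound:
  fixes S :: "'a::{real_inner,complete_space} set"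
  assumes "subspace S" "closed S" "selfadjoint_on S D A" "nonneg_on D A"
    and "0 < K" and bound: "\<And>x. norm (resolvent1_ext S D A x) \<le> K * norm x" and "y \<in> D"
  shows "(1 / K - 1) * (y \<bullet> y) \<le> A y \<bullet> y"
proof -
  define B where "B x = A x - (-1) *\<^sub>R x" for x
  note Bs = selfadjoint_onD[OF selfadjoint_on_shift[OF assms(1,3), of "-1", folded B_def]]
  have "nonneg_on D B"
    using \<open>nonneg_on D A\<close> by (simp add: nonneg_on_def B_def inner_add_left add_nonneg_nonneg)
  have "y \<in> S" using lin_op_onD(2)[OF Bs(1)] \<open>y \<in> D\<close> by blast
  then have "B (resolvent1_ext S D A y) = y"
    using resolvent1_ext_eq[OF assms(1-4), of y] proj_on_id[OF assms(1,2)] by (simp add: B_def)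
  then have "y \<bullet> y \<le> K * (B y \<bullet> y)"
    using bound resolvent1_ext_in[OF assms(1-4)]
    by (intro inner_le_form_if_inverse_bound[OF Bs(1) Bs(3) \<open>nonneg_on D B\<close> \<open>y \<in> D\<close>])
  then show ?thesis using \<open>0 < K\<close> by (simp add: B_def inner_add_left field_simps)
qed

lemma spectrum_on_ge_if_resolvent1_ext_close:
  fixes S1 S2 :: "'a::{real_inner,complete_space} set"
  assumes "subspace S1" "closed S1" "selfadjoint_on S1 D1 A1" "nonneg_on D1 A1"
    and "subspace S2" "closed S2" "selfadjoint_on S2 D2 A2" "nonneg_on D2 A2"
    and "0 \<le> c" and A1_lower: "\<And>y. y \<in> D1 \<Longrightarrow> c * (y \<bullet> y) \<le> A1 y \<bullet> y"
    and "0 \<le> N" and close: "\<And>x. norm (resolvent1_ext S1 D1 A1 x - resolvent1_ext S2 D2 A2 x) \<le> N * norm x"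
    and "\<mu> \<in> spectrum_on S2 D2 A2"
  shows "1 / (1 / (c + 1) + N) - 1 \<le> \<mu>"
proof (rule spectrum_on_ge_if_form_lower_bound[OF assms(5-7) _ \<open>\<mu> \<in> spectrum_on S2 D2 A2\<close>])
  let ?R1 = "resolvent1_ext S1 D1 A1" and ?R2 = "resolvent1_ext S2 D2 A2" and ?K = "1 / (c + 1) + N"
  have "norm (?R2 x) \<le> ?K * norm x" for x
  proof -
    have "norm (?R2 x) \<le> norm (?R1 x) + norm (?R1 x - ?R2 x)"
      by (metis norm_triangle_sub norm_minus_commute)
    also have "\<dots> \<le> norm x / (c + 1) + N * norm x"
      using norm_resolvent1_ext_le[OF assms(1-4) A1_lower \<open>0 \<le> c\<close>, of x] close[of x] \<open>0 \<le> c\<close>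
      by (intro add_mono) (simp_all add: le_divide_eq mult.commute)
    finally show ?thesis by (simp add: algebra_simps)
  qed
  moreover have "0 < ?K" using \<open>0 \<le> c\<close> \<open>0 \<le> N\<close> by (simp add: add_pos_nonneg)
  ultimately show "(1 / ?K - 1) * (y \<bullet> y) \<le> A2 y \<bullet> y" if "y \<in> D2" for y
    using form_lower_bound_if_resolvent1_ext_bound[OF assms(5-8)] that by blast
qed

lemma diff_le_if_shifted_inverse_bound:
  fixes l1 l2 N :: real
  assumes "0 \<le> l2" "l2 \<le> l1" "0 \<le> N" "1 / (1 / (l1 + 1) + N) - 1 \<le> l2"
  shows "l1 - l2 \<le> (l1 + 1)^2 * N"
proof -
  have "0 < 1 / (l1 + 1) + N" using assms(1-3) by (simp add: add_pos_nonneg)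
  moreover have "1 / (1 / (l1 + 1) + N) \<le> l2 + 1" using assms(4) by simp
  ultimately have "1 \<le> (1 / (l1 + 1) + N) * (l2 + 1)"
    by (simp add: pos_divide_le_eq mult.commute)
  then have "l1 - l2 \<le> N * (l1 + 1) * (l2 + 1)"
    using assms(1,2) by (simp add: field_simps)
  also have "\<dots> \<le> N * (l1 + 1) * (l1 + 1)"
    using assms(1-3) by (intro mult_left_mono) auto
  finally show ?thesis by (simp add: power2_eq_square algebra_simps)
qed

lemma bounded_op_on_add_id: "bounded_op_on D A \<Longrightarrow> bounded_op_on D (\<lambda>x. A x + x)"
  unfolding bounded_op_on_def
proof (elim exE, intro exI ballI)
  fix C x assume "\<forall>x\<in>D. norm (A x) \<le> C * norm x" "x \<in> D"
  then have "norm (A x) \<le> C * norm x" by blast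
  then show "norm (A x + x) \<le> (C + 1) * norm x"
    using norm_triangle_ineq[of "A x" x] by (simp add: distrib_right)
qed

theorem lemma4p3:
  fixes S :: "'a::{real_inner, complete_space} set"
    and D1 D2 :: "'a set" and A1 A2 :: "'a \<Rightarrow> 'a" and l1 l2 :: real
  assumes "subspace S" and "closed S"
    and "selfadjoint_on S D1 A1" and "nonneg_on D1 A1"
    and "selfadjoint_on UNIV D2 A2" and "nonneg_on D2 A2"
    and "l1 \<in> spectrum_on S D1 A1" and "\<forall>\<mu>\<in>spectrum_on S D1 A1. l1 \<le> \<mu>"
    and "l2 \<in> spectrum_on UNIV D2 A2" and "\<forall>\<mu>\<in>spectrum_on UNIV D2 A2. l2 \<le> \<mu>"
    and "l1 \<ge> l2"
  shows "0 \<le> l1 - l2 \<and>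
         l1 - l2 \<le> (l1 + 1)^2 * onorm (\<lambda>x. resolvent1_ext S D1 A1 x - resolvent1_ext UNIV D2 A2 x) \<and>
         (bounded_op_on D1 A1 \<longrightarrow>
            (l1 + 1)^2 * onorm (\<lambda>x. resolvent1_ext S D1 A1 x - resolvent1_ext UNIV D2 A2 x)
            \<le> (op_norm_on D1 (\<lambda>x. A1 x + x))^2 *
               onorm (\<lambda>x. resolvent1_ext S D1 A1 x - resolvent1_ext UNIV D2 A2 x))"
proof -
  note H1 = assms(1-4) and H2 = subspace_UNIV closed_UNIV assms(5,6)
  define N where "N = onorm (\<lambda>x. resolvent1_ext S D1 A1 x - resolvent1_ext UNIV D2 A2 x)"
  have "bounded_linear (\<lambda>x. resolvent1_ext S D1 A1 x - resolvent1_ext UNIV D2 A2 x)"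
    by (intro bounded_linear_sub bounded_linear_resolvent1_ext H1 H2)
  note N_bound = onorm[OF this, folded N_def] and N_nonneg = onorm_pos_le[OF this, folded N_def]
  have "0 \<le> l2"
    using spectrum_on_ge_if_form_lower_bound[OF H2(1-3) _ assms(9), of 0] assms(6)
    by (simp add: nonneg_on_def)
  have A1_lower: "l1 * (y \<bullet> y) \<le> A1 y \<bullet> y" if "y \<in> D1" for y
    using form_lower_bound_if_spectrum_on_min[OF H1(1,3,4) _ that] assms(8) by blast
  have "1 / (1 / (l1 + 1) + N) - 1 \<le> l2"
    using \<open>0 \<le> l2\<close> \<open>l1 \<ge> l2\<close>
    by (intro spectrum_on_ge_if_resolvent1_ext_close[OF H1 H2 _ A1_lower N_nonneg N_bound assms(9)]) auto
  then have "l1 - l2 \<le> (l1 + 1)^2 * N"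
    using \<open>0 \<le> l2\<close> \<open>l1 \<ge> l2\<close> N_nonneg by (intro diff_le_if_shifted_inverse_bound)
  moreover have "(l1 + 1)^2 * N \<le> (op_norm_on D1 (\<lambda>x. A1 x + x))^2 * N" if "bounded_op_on D1 A1"
  proof -
    obtain y where "y \<in> D1" "y \<noteq> 0" using spectrum_on_nonempty_imp_nonzero[OF H1(1,3) assms(7)] .
    then have "l1 + 1 \<le> op_norm_on D1 (\<lambda>x. A1 x + x)"
      using lin_op_onD(1)[OF selfadjoint_onD(1)[OF assms(3)]] bounded_op_on_add_id[OF that] A1_lower
      by (intro op_norm_on_ge_if_form_lower_bound) (auto simp: inner_add_left algebra_simps)
    with \<open>0 \<le> l2\<close> \<open>l1 \<ge> l2\<close> N_nonneg show ?thesis by (intro mult_right_mono power_mono) auto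
  qed
  ultimately show ?thesis using \<open>l1 \<ge> l2\<close> unfolding N_def by auto
qed

end
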